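(* Let $\sigma\in S_V$ be a valid composite state of $\mathcal{M}uddy\mathcal{P}uzzle$ with $\sigma\notin S_0$, and let $N=|M|$ where $M=\bigcup_{k}\mathit{Obs}(\sigma_k)$. Then for every component $i$ of $\sigma$ which is a running state $\sigma_i=\langle\mathit{Obs}_i,r_i,s_i\rangle$: (1) if $s_i=u$, then $r_i<|\mathit{Obs}_i|$ (and $|\mathit{Obs}_i|\le N$); (2) if $s_i=m$, then $r_i=N-1=|\mathit{Obs}_i|$; (3) if $s_i=c$, then $r_i=N=|\mathit{Obs}_i|$.
   Context: Fix $n \ge 1$ children indexed $1,\dots,n$. A message is a triple $\langle j, r, s\rangle$ with $j \in \{1,\dots,n\}$ (the sender), $r \in \mathbb{N}$ (a round number) and $s \in \{u,m,c\}$ (epistemic status: $u$ = "does not know own status", $m$ = "knows they are muddy", $c$ = "knows they are clean"); $\bot$ denotes "no message". Child $i$ is a VLSM $\mathcal{C}_i$ with labels $\{\mathit{init},\mathit{emit},\mathit{receive}\}$, no initial messages, initial states $\langle \mathit{Obs}\rangle$ with $\mathit{Obs}\subseteq\{1,\dots,n\}$, and running states $\langle \mathit{Obs}, r, s\rangle$ with $\mathit{Obs}\subseteq\{1,\dots,n\}$, $r\in\mathbb{N}$, $s\in\{u,m,c\}$; $\mathit{Obs}(\cdot)$ denotes the observation set of either kind of state. Transitions $\tau_i$ and local validity $\beta_i$: - init: enabled only on an initial state $\langle\mathit{Obs}\rangle$ with input $\bot$; goes to $\langle \mathit{Obs},0,u\rangle$ if $\mathit{Obs}\ne\emptyset$ and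 to $\langle\mathit{Obs},0,m\rangle$ if $\mathit{Obs}=\emptyset$; output $\bot$. - emit: enabled only on a running state $\langle\mathit{Obs},r,s\rangle$ with input $\bot$; state unchanged, output $\langle i,r,s\rangle$. - receive: on a running state $\langle\mathit{Obs},r,s\rangle$ with input message $\langle j,r',s'\rangle$, output $\bot$, new state given by the first applicable case: (R1) $s\in\{m,c\}$: unchanged. Otherwise $s=u$ and: (R2) $s'=c$, $j\notin\mathit{Obs}$, $r'=|\mathit{Obs}|$: $\langle\mathit{Obs},r',c\rangle$; (R3) $s'=c$, $j\notin\mathit{Obs}$, $r'=|\mathit{Obs}|+1$: $\langle\mathit{Obs},r'-1,m\rangle$; (R4) $s'=m$, $j\in\mathit{Obs}$, $r'=|\mathit{Obs}|$: $\langle\mathit{Obs},r',m\rangle$; (R5) $s'=m$, $j\in\mathit{Obs}$, $r'=|\mathit{Obs}|-1$: $\langle\mathit{Obs},r'+1,c\rangle$; (R6) $s'=u$, $j\in\mathit{Obs}$, $r'<r$: unchanged; (R7) $s'=u$, $j\in\mathit{Obs}$, $r\le r'<|\mathit{Obs}|-1$: $\langle\mathit{Obs},r'+1,u\rangle$; (R8) $s'=u$, $j\in\mathit{Obs}$, $r'=|\mathit{Obs}|-1$: $\langle\mathit{Obs},r'+1,m\rangle$; (R9) $s'=u$, $j\notin\mathit{Obs}$, $r'\le r$: unchanged; (R10) $s'=u$, $j\notin\mathit{Obs}$, $r<r'<|\mathit{Obs}|$: $\langle\mathit{Obs},r',u\rangle$; (R11) $s'=u$, $j\notin\mathit{Obs}$,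 $r'=|\mathit{Obs}|$: $\langle\mathit{Obs},r',m\rangle$. $\beta_i$ for receive holds exactly when one of (R1)–(R11) applies. Composition $\mathcal{M}uddy\mathcal{P}uzzle=(\mathcal{C}_1+\dots+\mathcal{C}_n)|_\varphi$: composite states are tuples $\sigma=(\sigma_1,\dots,\sigma_n)$; composite initial states ($S_0$) are those with every component initial; labels are pairs $(i,l)$; transition $(i,l)$ with input $\mu$ applies $\tau_i(l,\sigma_i,\mu)$ to component $i$, leaves the others unchanged, and is allowed iff $\beta_i(l,\sigma_i,\mu)\wedge\varphi((i,l),\sigma,\mu)$. For a composite state $\sigma$ let $M=\bigcup_{i}\mathit{Obs}(\sigma_i)$; $\mathbf{consistent}(\sigma)$ means $M\ne\emptyset$ and $\mathit{Obs}(\sigma_i)=M\setminus\{i\}$ for all $i$. The composition constraint: $\varphi((i,\mathit{init}),\sigma,\mu)=\mathbf{consistent}(\sigma)$; $\varphi((i,\mathit{emit}),\sigma,\mu)=\text{true}$; $\varphi((i,\mathit{receive}),\sigma,\langle j,r',s'\rangle)$ holds iff $\sigma_j$ is a running state $\langle \mathit{Obs}_j,r_j,s_j\rangle$ and $(s'=s_j\wedge r'=r_j)\vee(s'=u\wedge r'<r_j)$. Validity (VLSM sense): a transition is constrained if its input satisfies the constraint. Valid traces and valid messages are defined by simultaneous induction: a valid trace is a finite sequence of constrained transitions starting in a composite initial state in which every input message is either $\bot$ or a valid message; a valid message is one output by some transition of some valid trace. A valid state is one reachable by a valid trace; $S_V$ is the set of valid states and $S_V^\ast=S_V\setminus S_0$.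 *)

theory Defs
  imports Main
begin

datatype status = U | Mu | Cl   (* u: unknown, m: knows muddy, c: knows clean *)

(* message <j, r, s> : sender j, round r, status s *)
type_synonym message = "nat \<times> nat \<times> status"

datatype cstate = Init "nat set" | Run "nat set" nat status

datatype label = LInit | LEmit | LReceive

fun obs :: "cstate \<Rightarrow> nat set" where
  "obs (Init Ob) = Ob"
| "obs (Run Ob r s) = Ob"

(* receive transition; None means that none of (R1)-(R11) applies (beta fails) *)
fun recv :: "cstate \<Rightarrow> message \<Rightarrow> cstate option" where
  "recv (Init Ob) m = None"
| "recv (Run Ob r s) (j, r', s') =
    (if s \<noteq> U then Some (Run Ob r s)
     else if s' = Cl \<and> j \<notin> Ob \<and> r' = card Ob then Some (Run Ob r' Cl)
     else if s' = Cl \<and> j \<notin> Ob \<and> r' = card Ob + 1 then Some (Run Ob (r' - 1) Mu)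
     else if s' = Mu \<and> j \<in> Ob \<and> r' = card Ob then Some (Run Ob r' Mu)
     else if s' = Mu \<and> j \<in> Ob \<and> r' + 1 = card Ob then Some (Run Ob (r' + 1) Cl)
     else if s' = U \<and> j \<in> Ob \<and> r' < r then Some (Run Ob r s)
     else if s' = U \<and> j \<in> Ob \<and> r \<le> r' \<and> r' + 1 < card Ob then Some (Run Ob (r' + 1) U)
     else if s' = U \<and> j \<in> Ob \<and> r' + 1 = card Ob then Some (Run Ob (r' + 1) Mu)
     else if s' = U \<and> j \<notin> Ob \<and> r' \<le> r then Some (Run Ob r s)
     else if s' = U \<and> j \<notin> Ob \<and> r < r' \<and> r' < card Ob then Some (Run Ob r' U)
     else if s' = U \<and> j \<notin> Ob \<and> r' = card Ob then Some (Run Ob r' Mu)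
     else None)"

(* transition of child i combined with its local validity beta_i:
   Some (new state, output) if beta_i holds, None otherwise *)
fun child_step :: "nat \<Rightarrow> label \<Rightarrow> cstate \<Rightarrow> message option \<Rightarrow> (cstate \<times> message option) option" where
  "child_step i LInit (Init Ob) None = Some (Run Ob 0 (if Ob = {} then Mu else U), None)"
| "child_step i LEmit (Run Ob r s) None = Some (Run Ob r s, Some (i, r, s))"
| "child_step i LReceive st (Some m) = map_option (\<lambda>st'. (st', None)) (recv st m)"
| "child_step i l st mu = None"

(* composite states: functions nat => cstate, components 1..n meaningful *)
type_synonym cstates = "nat \<Rightarrow> cstate"

definition composite_initial :: "nat \<Rightarrow> cstates \<Rightarrow> bool" where
  "composite_initial n \<sigma> \<longleftrightarrow>
     (\<forall>i\<in>{1..n}. \<exists>Ob. Ob \<subseteq> {1..n} \<and> \<sigma> i = Init Ob) \<and>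
     (\<forall>i. i \<notin> {1..n} \<longrightarrow> \<sigma> i = Init {})"

definition Mset :: "nat \<Rightarrow> cstates \<Rightarrow> nat set" where
  "Mset n \<sigma> = (\<Union>i\<in>{1..n}. obs (\<sigma> i))"

definition consistent :: "nat \<Rightarrow> cstates \<Rightarrow> bool" where
  "consistent n \<sigma> \<longleftrightarrow> Mset n \<sigma> \<noteq> {} \<and> (\<forall>i\<in>{1..n}. obs (\<sigma> i) = Mset n \<sigma> - {i})"

fun phi :: "nat \<Rightarrow> label \<Rightarrow> cstates \<Rightarrow> message option \<Rightarrow> bool" where
  "phi n LInit \<sigma> mu = consistent n \<sigma>"
| "phi n LEmit \<sigma> mu = True"
| "phi n LReceive \<sigma> (Some (j, r', s')) =
     (j \<in> {1..n} \<and>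
      (case \<sigma> j of
         Run Obj rj sj \<Rightarrow> (s' = sj \<and> r' = rj) \<or> (s' = U \<and> r' < rj)
       | Init Obj \<Rightarrow> False))"
| "phi n LReceive \<sigma> None = False"

definition ctrans :: "nat \<Rightarrow> nat \<Rightarrow> label \<Rightarrow> cstates \<Rightarrow> message option \<Rightarrow> (cstates \<times> message option) option" where
  "ctrans n i l \<sigma> mu =
     (if i \<in> {1..n} \<and> phi n l \<sigma> mu then
        map_option (\<lambda>(st', out). (\<sigma>(i := st'), out)) (child_step i l (\<sigma> i) mu)
      else None)"

inductive valid_state :: "nat \<Rightarrow> cstates \<Rightarrow> bool"
  and valid_msg :: "nat \<Rightarrow> message \<Rightarrow> bool" for n where
  vs_init: "composite_initial n \<sigma> \<Longrightarrow> valid_state n \<sigma>"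
| vs_step: "\<lbrakk>valid_state n \<sigma>; mu = None \<or> (\<exists>m. mu = Some m \<and> valid_msg n m);
             ctrans n i l \<sigma> mu = Some (\<sigma>', out)\<rbrakk> \<Longrightarrow> valid_state n \<sigma>'"
| vm_out: "\<lbrakk>valid_state n \<sigma>; mu = None \<or> (\<exists>m. mu = Some m \<and> valid_msg n m);
             ctrans n i l \<sigma> mu = Some (\<sigma>', Some m')\<rbrakk> \<Longrightarrow> valid_msg n m'"

end

theory Submission imports Defs begin

text \<open>Transitions never change observation sets, so throughout a valid trace every child \<open>i\<close>
observes \<open>M - {i}\<close>, a set of size \<open>N - 1\<close> if \<open>i\<close> is muddy and \<open>N\<close> if it is clean.
The three claimed bounds are then an invariant of every running component. An \<open>init\<close> step
starts at round 0 (in status \<open>m\<close> exactly when the child sees nobody, i.e. \<open>N = 1\<close>). A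
\<open>receive\<close> step can only read the sender's current round and status, or an earlier round
with status \<open>u\<close>, so the sender's own bounds control the incoming round number, and a case
analysis of rules (R1)-(R11) shows that the receiver's bounds survive.\<close>

definition round_bounds :: "nat set \<Rightarrow> nat set \<Rightarrow> nat \<Rightarrow> status \<Rightarrow> bool" where
  "round_bounds M Ob r s \<longleftrightarrow>
     (s = U \<longrightarrow> r < card Ob \<and> card Ob \<le> card M) \<and>
     (s = Mu \<longrightarrow> r + 1 = card M \<and> r = card Ob) \<and>
     (s = Cl \<longrightarrow> r = card M \<and> r = card Ob)"

lemma recv_obs: "recv st m = Some st' \<Longrightarrow> obs st' = obs st"
  by (cases st; cases m) (auto split: if_splits)

lemma child_step_obs: "child_step i l st mu = Some (st', out) \<Longrightarrow> obs st' = obs st"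
  by (cases "(i, l, st, mu)" rule: child_step.cases) (auto dest: recv_obs)

lemma ctrans_obs:
  assumes "ctrans n i l \<sigma> mu = Some (\<sigma>', out)"
  shows "obs (\<sigma>' k) = obs (\<sigma> k)"
  using assms child_step_obs unfolding ctrans_def by (fastforce split: if_splits)

lemma ctrans_Mset: "ctrans n i l \<sigma> mu = Some (\<sigma>', out) \<Longrightarrow> Mset n \<sigma>' = Mset n \<sigma>"
  unfolding Mset_def by (simp add: ctrans_obs)

lemma ctrans_consistent:
  "ctrans n i l \<sigma> mu = Some (\<sigma>', out) \<Longrightarrow> consistent n \<sigma>' \<longleftrightarrow> consistent n \<sigma>"
  unfolding consistent_def by (simp add: ctrans_Mset ctrans_obs)

lemma round_bounds_init:
  assumes "finite M" and "M \<noteq> {}" and "Ob = M - {i}"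
  shows "round_bounds M Ob 0 (if Ob = {} then Mu else U)"
proof (cases "Ob = {}")
  case True
  with assms have "M = {i}" by auto
  with True show ?thesis by (simp add: round_bounds_def)
next
  case False
  with assms have "0 < card Ob" and "card Ob \<le> card M" by (auto intro: card_mono)
  with False show ?thesis by (simp add: round_bounds_def)
qed

lemma round_bounds_recv:
  assumes Ob: "Ob = M - {i}" and Obj: "Obj = M - {j}"
    and bounds_i: "round_bounds M Ob r U" and bounds_j: "round_bounds M Obj rj sj"
    and msg: "(s' = sj \<and> r' = rj) \<or> (s' = U \<and> r' < rj)"
    and self: "j = i \<Longrightarrow> rj = r \<and> sj = U"
    and step: "recv (Run Ob r U) (j, r', s') = Some st'"
  shows "\<exists>r2 s2. st' = Run Ob r2 s2 \<and> round_bounds M Ob r2 s2"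
proof -
  define N where "N = card M"
  have card_Ob: "card Ob = (if i \<in> M then N - 1 else N)"
    and card_Obj: "card Obj = (if j \<in> M then N - 1 else N)"
    using Ob Obj by (simp_all add: N_def card_Diff_singleton_if)
  have j_Ob: "j \<in> Ob \<longleftrightarrow> j \<in> M \<and> j \<noteq> i" using Ob by auto
  have r: "r < card Ob" and "card Ob \<le> N" using bounds_i by (simp_all add: round_bounds_def N_def)
  then have "0 < N" by simp
  have bounds: "round_bounds M Ob r2 s2 \<longleftrightarrow>
      (s2 = U \<longrightarrow> r2 < card Ob) \<and> (s2 = Mu \<longrightarrow> r2 + 1 = N \<and> r2 = card Ob) \<and>
      (s2 = Cl \<longrightarrow> r2 = N \<and> r2 = card Ob)" for r2 s2
    using \<open>card Ob \<le> N\<close> by (auto simp: round_bounds_def N_def)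
  show ?thesis
  proof (cases s')
    case Cl
    with msg bounds_j self have "r' = N" "card Obj = N" "j \<noteq> i"
      by (auto simp: round_bounds_def N_def)
    with card_Obj \<open>0 < N\<close> j_Ob have "j \<notin> Ob" by (auto split: if_splits)
    with step Cl \<open>r' = N\<close> show ?thesis
      by (auto simp: bounds card_Ob split: if_splits)
  next
    case Mu
    with msg bounds_j self have "r' + 1 = N" "card Obj + 1 = N" "j \<noteq> i"
      by (auto simp: round_bounds_def N_def)
    with card_Obj j_Ob have "j \<in> Ob" by (auto split: if_splits)
    with step Mu \<open>r' + 1 = N\<close> show ?thesis
      by (auto simp: bounds card_Ob split: if_splits)
  next
    case U
    with msg bounds_j have "r' < card Obj"
      by (cases sj) (auto simp: round_bounds_def)
    show ?thesis
    proof (cases "j \<in> Ob")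
      case True
      with j_Ob card_Obj \<open>r' < card Obj\<close> have "r' + 1 < N" by auto
      with step U True r show ?thesis
        by (auto simp: bounds card_Ob split: if_splits)
    next
      case False
      have "r' < card Ob \<or> r' + 1 = N \<and> i \<in> M"
      proof (cases "j = i")
        case True
        with self msg U r show ?thesis by auto
      next
        case False
        with \<open>j \<notin> Ob\<close> j_Ob card_Obj card_Ob \<open>r' < card Obj\<close> show ?thesis by auto
      qed
      with step U False r show ?thesis
        by (auto simp: bounds card_Ob split: if_splits)
    qed
  qed
qed

definition run_invariant :: "nat \<Rightarrow> cstates \<Rightarrow> bool" where
  "run_invariant n \<sigma> \<longleftrightarrow> finite (Mset n \<sigma>) \<and>
     (\<forall>k\<in>{1..n}. \<forall>Ob r s. \<sigma> k = Run Ob r s \<longrightarrow>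
        consistent n \<sigma> \<and> round_bounds (Mset n \<sigma>) Ob r s)"

lemma run_invariant_initial: "composite_initial n \<sigma> \<Longrightarrow> run_invariant n \<sigma>"
proof -
  assume init: "composite_initial n \<sigma>"
  then have "Mset n \<sigma> \<subseteq> {1..n}"
    unfolding composite_initial_def Mset_def by fastforce
  then have "finite (Mset n \<sigma>)" by (rule finite_subset) simp
  with init show ?thesis
    unfolding run_invariant_def composite_initial_def by fastforce
qed

lemma run_invariant_receive:
  assumes inv: "run_invariant n \<sigma>" and i: "i \<in> {1..n}"
    and ph: "phi n LReceive \<sigma> (Some (j, r', s'))"
    and rc: "recv (\<sigma> i) (j, r', s') = Some (Run Ob r s)"
  shows "consistent n \<sigma> \<and> round_bounds (Mset n \<sigma>) Ob r s"
proof -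
  define M where "M = Mset n \<sigma>"
  have old: "\<And>k Ob r s. \<lbrakk>k \<in> {1..n}; \<sigma> k = Run Ob r s\<rbrakk> \<Longrightarrow> consistent n \<sigma> \<and> round_bounds M Ob r s"
    using inv unfolding run_invariant_def M_def by blast
  obtain r0 s0 where \<sigma>i: "\<sigma> i = Run Ob r0 s0"
    using rc recv_obs[OF rc] by (cases "\<sigma> i") auto
  have con: "consistent n \<sigma>" and bounds_i: "round_bounds M Ob r0 s0" using old i \<sigma>i by auto
  show ?thesis
  proof (cases "s0 = U")
    case False
    with rc \<sigma>i con bounds_i show ?thesis by (auto simp: M_def)
  next
    case True
    obtain Obj rj sj where j: "j \<in> {1..n}" and \<sigma>j: "\<sigma> j = Run Obj rj sj"
      and msg: "(s' = sj \<and> r' = rj) \<or> (s' = U \<and> r' < rj)"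
      using ph by (cases "\<sigma> j") auto
    have Ob: "Ob = M - {i}" and Obj: "Obj = M - {j}"
      using con i j \<sigma>i \<sigma>j unfolding consistent_def M_def by (metis obs.simps(2))+
    have bounds_j: "round_bounds M Obj rj sj" using old j \<sigma>j by blast
    have self: "j = i \<Longrightarrow> rj = r0 \<and> sj = U" using \<sigma>i \<sigma>j True by simp
    have "recv (Run Ob r0 U) (j, r', s') = Some (Run Ob r s)" using rc \<sigma>i True by simp
    from round_bounds_recv[OF Ob Obj _ bounds_j msg self this] bounds_i True con
    show ?thesis by (auto simp: M_def)
  qed
qed

lemma run_invariant_step:
  assumes inv: "run_invariant n \<sigma>" and step: "ctrans n i l \<sigma> mu = Some (\<sigma>', out)"
  shows "run_invariant n \<sigma>'"
proof -
  define M where "M = Mset n \<sigma>"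
  obtain st' where i: "i \<in> {1..n}" and ph: "phi n l \<sigma> mu"
    and cs: "child_step i l (\<sigma> i) mu = Some (st', out)" and \<sigma>': "\<sigma>' = \<sigma>(i := st')"
    using step unfolding ctrans_def by (auto split: if_splits)
  have fin: "finite M"
    and old: "\<And>k Ob r s. \<lbrakk>k \<in> {1..n}; \<sigma> k = Run Ob r s\<rbrakk> \<Longrightarrow> consistent n \<sigma> \<and> round_bounds M Ob r s"
    using inv unfolding run_invariant_def M_def by blast+
  have new: "consistent n \<sigma> \<and> round_bounds M Ob r s" if st': "st' = Run Ob r s" for Ob r s
  proof (cases l)
    case LInit
    then obtain Ob0 where \<sigma>i: "\<sigma> i = Init Ob0" and "st' = Run Ob0 0 (if Ob0 = {} then Mu else U)"
      using cs by (cases "\<sigma> i"; cases mu) auto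
    moreover have con: "consistent n \<sigma>" using ph LInit by simp
    moreover from con i \<sigma>i have "M \<noteq> {}" "Ob0 = M - {i}"
      unfolding consistent_def M_def by (metis obs.simps(1))+
    ultimately show ?thesis using round_bounds_init[OF fin] st' by simp
  next
    case LEmit
    with cs st' have "\<sigma> i = st'" by (cases "\<sigma> i"; cases mu) auto
    with old i st' show ?thesis by blast
  next
    case LReceive
    with ph cs st' show ?thesis
      using run_invariant_receive[OF inv i] by (cases mu) (auto simp: M_def)
  qed
  show ?thesis
    unfolding run_invariant_def ctrans_Mset[OF step] ctrans_consistent[OF step]
    using fin old new i by (auto simp: \<sigma>' M_def)
qed

lemma valid_state_run_invariant: "valid_state n \<sigma> \<Longrightarrow> run_invariant n \<sigma>"
  by (induct rule: valid_state_valid_msg.inducts(1)[where ?P2.0 = "\<lambda>_. True"])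
     (auto intro: run_invariant_initial run_invariant_step)

theorem mainTheorem3:
  fixes n :: nat and \<sigma> :: cstates and i r :: nat and Ob :: "nat set" and s :: status
  assumes "n \<ge> 1"
    and "valid_state n \<sigma>"
    and "\<not> composite_initial n \<sigma>"
    and "i \<in> {1..n}"
    and "\<sigma> i = Run Ob r s"
  shows "(s = U \<longrightarrow> r < card Ob \<and> card Ob \<le> card (Mset n \<sigma>)) \<and>
         (s = Mu \<longrightarrow> r + 1 = card (Mset n \<sigma>) \<and> r = card Ob) \<and>
         (s = Cl \<longrightarrow> r = card (Mset n \<sigma>) \<and> r = card Ob)"
proof -
  have "run_invariant n \<sigma>" using assms(2) by (rule valid_state_run_invariant)
  with assms(4,5) have "round_bounds (Mset n \<sigma>) Ob r s"
    unfolding run_invariant_def by blast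
  then show ?thesis unfolding round_bounds_def .
qed

end
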